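(* Let $S\subset\mathbb R^d$ be a thin horizontal strip and let $K\subset S$ be a connected closed set that separates $\mathcal U^+(S)$ and $\mathcal U^-(S)$ (i.e. they lie in different connected components of $\mathbb R^d\setminus K$). Then $C_S\subset K$, where $C_S=\overline{\mathcal U^+(S)}\cap\overline{\mathcal U^-(S)}$.
   Context: $\pi_d$ is the last coordinate projection. $S\subset\mathbb R^d$ is horizontal if $\pi_d(S)$ is bounded and $\mathbb R^d\setminus S$ contains two distinct connected components with unbounded $\pi_d$-image: $\mathcal U^+(S)$ (bounded below) and $\mathcal U^-(S)$ (bounded above). A horizontal strip is a horizontal connected closed set $S$ with $\mathbb R^d\setminus S=\mathcal U^+(S)\cup\mathcal U^-(S)$. Thin means empty interior. *)

theory Defs
  imports "HOL-Analysis.Analysis"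
begin

text \<open>Points of R^d are vectors real^'n whose index type is finite and well-ordered;
  the last coordinate is the one at the greatest index.\<close>

definition last_coord :: "real ^ ('n::{finite,wellorder}) \<Rightarrow> real" where
  "last_coord x = x $ (GREATEST i. True)"

definition Uplus :: "(real ^ ('n::{finite,wellorder})) set \<Rightarrow> (real ^ ('n::{finite,wellorder})) set" where
  "Uplus S = (THE U. U \<in> components (- S) \<and> bdd_below (last_coord ` U) \<and> \<not> bdd_above (last_coord ` U))"

definition Uminus :: "(real ^ ('n::{finite,wellorder})) set \<Rightarrow> (real ^ ('n::{finite,wellorder})) set" where
  "Uminus S = (THE U. U \<in> components (- S) \<and> bdd_above (last_coord ` U) \<and> \<not> bdd_below (last_coord ` U))"

definition horizontal :: "(real ^ ('n::{finite,wellorder})) set \<Rightarrow> bool" where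
  "horizontal S \<longleftrightarrow> bounded (last_coord ` S) \<and>
     (\<exists>U V. U \<in> components (- S) \<and> V \<in> components (- S) \<and> U \<noteq> V \<and>
        bdd_below (last_coord ` U) \<and> \<not> bdd_above (last_coord ` U) \<and>
        bdd_above (last_coord ` V) \<and> \<not> bdd_below (last_coord ` V))"

definition horizontal_strip :: "(real ^ ('n::{finite,wellorder})) set \<Rightarrow> bool" where
  "horizontal_strip S \<longleftrightarrow> horizontal S \<and> connected S \<and> closed S \<and>
     - S = Uplus S \<union> Uminus S"

definition thin :: "(real ^ ('n::{finite,wellorder})) set \<Rightarrow> bool" where
  "thin S \<longleftrightarrow> interior S = {}"

end

theory Submission
  imports Defs
begin

text \<open>A point outside the closed set K has a ball around it avoiding K; if the point lay in
  both closures, that connected ball would join a point of U+(S) to a point of U-(S) inside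
  the complement of K.\<close>

lemma closure_Int_closure_subset_of_separating:
  fixes A B K :: "'a::real_normed_vector set"
  assumes "closed K"
    and separates: "\<forall>x\<in>A. \<forall>y\<in>B. \<not> connected_component (- K) x y"
  shows "closure A \<inter> closure B \<subseteq> K"
proof
  fix x assume x: "x \<in> closure A \<inter> closure B"
  show "x \<in> K"
  proof (rule ccontr)
    assume "x \<notin> K"
    with \<open>closed K\<close> obtain e where "e > 0" and ball: "ball x e \<subseteq> - K"
      by (metis ComplI open_Compl open_contains_ball)
    obtain a where a: "a \<in> A" "dist a x < e"
      using x \<open>e > 0\<close> closure_approachable by blast
    obtain b where b: "b \<in> B" "dist b x < e"
      using x \<open>e > 0\<close> closure_approachable by blast
    have "a \<in> ball x e" "b \<in> ball x e"
      using a b by (auto simp: dist_commute)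
    then have "connected_component (- K) a b"
      unfolding connected_component_def using ball connected_ball by blast
    with separates a b show False by blast
  qed
qed

theorem mainTheorem10:
  fixes S K :: "(real ^ ('n::{finite,wellorder})) set"
  assumes "horizontal_strip S" and "thin S"
    and "K \<subseteq> S" and "connected K" and "closed K"
    and "\<forall>x\<in>Uplus S. \<forall>y\<in>Uminus S. \<not> connected_component (- K) x y"
  shows "closure (Uplus S) \<inter> closure (Uminus S) \<subseteq> K"
  using closure_Int_closure_subset_of_separating assms(5,6) .

end
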